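(* A nonnegative random variable $X$ with survival function $\overline{F}(x) = \mathbb{P}(X>x)$ is completely subscalable if and only if the function $h(x) := x \, \overline{F}(x)$ is increasing (non-decreasing) on $(0, \infty)$.
   Context: A nonnegative random variable $X$ with survival function $\overline{F}$ is called completely subscalable if $\theta \, \overline{F}(x) \leq \overline{F}(x/\theta)$ for all $x \geq 0$ and all $\theta \in (0,1)$. *)

theory Defs
  imports "HOL-Probability.Probability"
begin

definition survival :: "'a measure \<Rightarrow> ('a \<Rightarrow> real) \<Rightarrow> real \<Rightarrow> real" where
  "survival M X x = measure M {\<omega> \<in> space M. X \<omega> > x}"

definition completely_subscalable :: "'a measure \<Rightarrow> ('a \<Rightarrow> real) \<Rightarrow> bool" where
  "completely_subscalable M X \<longleftrightarrow>
     (\<forall>x::real. x \<ge> 0 \<longrightarrow> (\<forall>\<theta>::real. 0 < \<theta> \<and> \<theta> < 1 \<longrightarrow>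
        \<theta> * survival M X x \<le> survival M X (x / \<theta>)))"

end

theory Submission
  imports Defs
begin

text \<open>Only the nonnegativity of the survival function matters. For \<open>x > 0\<close> put \<open>y = x / \<theta>\<close>;
  multiplying \<open>\<theta> F(x) \<le> F(y)\<close> by \<open>y > 0\<close> turns it into \<open>x F(x) \<le> y F(y)\<close>, and as \<open>\<theta>\<close>
  ranges over \<open>(0,1)\<close> the point \<open>y\<close> ranges over all of \<open>(x,\<infinity>)\<close>. At \<open>x = 0\<close> the
  condition reads \<open>\<theta> F(0) \<le> F(0)\<close>, which holds because \<open>F(0) \<ge> 0\<close>.\<close>

lemma scaled_le_iff_times_le:
  fixes F :: "real \<Rightarrow> real"
  assumes "0 < y"
  shows "\<theta> * F (\<theta> * y) \<le> F y \<longleftrightarrow> (\<theta> * y) * F (\<theta> * y) \<le> y * F y"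
proof -
  have "(\<theta> * y) * F (\<theta> * y) = y * (\<theta> * F (\<theta> * y))"
    by (simp add: algebra_simps)
  then show ?thesis
    using assms by (simp add: mult_le_cancel_left_pos)
qed

lemma mono_on_times_iff_scaled_le:
  fixes F :: "real \<Rightarrow> real"
  shows "mono_on {0<..} (\<lambda>x. x * F x) \<longleftrightarrow>
         (\<forall>x>0. \<forall>\<theta>. 0 < \<theta> \<and> \<theta> < 1 \<longrightarrow> \<theta> * F x \<le> F (x / \<theta>))"
proof
  assume mono: "mono_on {0<..} (\<lambda>x. x * F x)"
  show "\<forall>x>0. \<forall>\<theta>. 0 < \<theta> \<and> \<theta> < 1 \<longrightarrow> \<theta> * F x \<le> F (x / \<theta>)"
  proof (intro allI impI)
    fix x \<theta> :: real
    assume x: "0 < x" and \<theta>: "0 < \<theta> \<and> \<theta> < 1"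
    define y where "y = x / \<theta>"
    have y: "0 < y" "x \<le> y" and x_eq: "x = \<theta> * y"
      using x \<theta> by (auto simp: y_def field_simps)
    have "x * F x \<le> y * F y"
      using mono x y by (auto intro: mono_onD)
    then have "\<theta> * F (\<theta> * y) \<le> F y"
      using scaled_le_iff_times_le[OF \<open>0 < y\<close>] unfolding x_eq by blast
    moreover have "x / \<theta> = y"
      by (simp add: y_def)
    ultimately show "\<theta> * F x \<le> F (x / \<theta>)"
      by (simp only: x_eq)
  qed
next
  assume scaled: "\<forall>x>0. \<forall>\<theta>. 0 < \<theta> \<and> \<theta> < 1 \<longrightarrow> \<theta> * F x \<le> F (x / \<theta>)"
  show "mono_on {0<..} (\<lambda>x. x * F x)"
  proof (rule mono_onI)
    fix x y :: real
    assume x: "x \<in> {0<..}" and y: "y \<in> {0<..}" and "x \<le> y"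
    show "x * F x \<le> y * F y"
    proof (cases "x = y")
      case False
      define \<theta> where "\<theta> = x / y"
      have \<theta>: "0 < \<theta>" "\<theta> < 1" and x_eq: "x = \<theta> * y"
        using x y \<open>x \<le> y\<close> False by (auto simp: \<theta>_def field_simps)
      have "x / \<theta> = y"
        using \<theta> by (simp add: x_eq)
      then have "\<theta> * F x \<le> F y"
        using scaled x \<theta> by auto
      then show ?thesis
        using scaled_le_iff_times_le y unfolding x_eq by auto
    qed simp
  qed
qed

theorem lemma6:
  fixes M :: "'a measure" and X :: "'a \<Rightarrow> real"
  assumes "prob_space M"
    and "X \<in> borel_measurable M"
    and "\<forall>\<omega>\<in>space M. X \<omega> \<ge> 0"
  shows "completely_subscalable M X \<longleftrightarrow>
         mono_on {0<..} (\<lambda>x::real. x * survival M X x)"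
proof -
  let ?F = "survival M X"
  have "\<theta> * ?F 0 \<le> ?F (0 / \<theta>)" if "0 < \<theta>" "\<theta> < 1" for \<theta> :: real
    using that measure_nonneg[of M] by (simp add: survival_def mult_left_le_one_le)
  then have "completely_subscalable M X \<longleftrightarrow>
             (\<forall>x>0. \<forall>\<theta>. 0 < \<theta> \<and> \<theta> < 1 \<longrightarrow> \<theta> * ?F x \<le> ?F (x / \<theta>))"
    unfolding completely_subscalable_def by (metis order.order_iff_strict div_0)
  then show ?thesis
    by (simp add: mono_on_times_iff_scaled_le)
qed

end
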